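(* Let $n = 2k$ with $k \geq 3$. Then no polygon in the family $\mathcal{A}_n$ of alternating polygons can be convexified by pop operations: for every $P \in \mathcal{A}_n$ and every finite sequence of (well-defined) pop operations applied successively starting from $P$, the resulting polygon is not convex.
   Context: A polygon $P = \{p_1, \ldots, p_n\}$ in the plane is a cyclic sequence of points (vertices), joined by edges $p_i p_{i+1}$, with indices taken modulo $n$ (so $p_{n+1} = p_1$, $p_0 = p_n$); it may be simple or self-intersecting. A pop operation at vertex $p_i$ replaces $p_i$ by its reflection with respect to the line through $p_{i-1}$ and $p_{i+1}$, leaving all other vertices unchanged; it is well-defined only when $p_{i-1} \neq p_{i+1}$. A polygon is convex if it is a simple closed polygon whose boundary bounds a convex region. A polygon can be convexified by pops if some finite sequence of well-defined pop operations transforms it into a convex polygon. Alternating polygons: fix coordinates in the plane and let $n = 2k$. Let $\mathbf{x} = (x_1, \ldots, x_k)$ and $\mathbf{y} = (y_1, \ldots, y_k)$ be vectors in $\mathbb{R}^k$ with $x_i > 0$, $y_i > 0$ for all $i$, and $x_i \neq x_j$, $y_i \neq y_j$ for all $i \neq j$. Let $\sigma = (\sigma_1, \ldots, \sigma_{2k}) \in \{-1, +1\}^{2k}$. The polygon $A(\mathbf{x}, \mathbf{y}, \sigma) = \{p_1, \ldots, p_{2k}\}$ is defined by $p_{2i+1} = (\sigma_{2i+1} x_{i+1}, 0)$ for $i = 0, \ldots, k-1$, and $p_{2i} = (0, \sigma_{2i} y_i)$ for $i = 1, \ldots, k$. The family $\mathcal{A}_n = \mathcal{A}_{2k}$ consists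 of all polygons $A(\mathbf{x}, \mathbf{y}, \sigma)$ for all such $\mathbf{x}, \mathbf{y}, \sigma$. *)

theory Defs
  imports "HOL-Analysis.Analysis"
begin

text \<open>Points of the plane are complex numbers: (a,b) is represented by Complex a b.
  A polygon with n vertices p_1..p_n is a list of length n; list index j (0-based)
  holds p_(j+1); indices are taken modulo n.\<close>

type_synonym polygon = "complex list"

definition prev_idx :: "nat \<Rightarrow> nat \<Rightarrow> nat" where
  "prev_idx n i = (i + n - 1) mod n"

definition next_idx :: "nat \<Rightarrow> nat \<Rightarrow> nat" where
  "next_idx n i = (i + 1) mod n"

definition reflect_line :: "complex \<Rightarrow> complex \<Rightarrow> complex \<Rightarrow> complex" where
  "reflect_line a b z = a + (b - a) * cnj ((z - a) / (b - a))"

definition pop_ok :: "polygon \<Rightarrow> nat \<Rightarrow> bool" where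
  "pop_ok P i \<longleftrightarrow> i < length P \<and>
     P ! prev_idx (length P) i \<noteq> P ! next_idx (length P) i"

definition pop :: "polygon \<Rightarrow> nat \<Rightarrow> polygon" where
  "pop P i = P[i := reflect_line (P ! prev_idx (length P) i) (P ! next_idx (length P) i) (P ! i)]"

inductive pop_reach :: "polygon \<Rightarrow> polygon \<Rightarrow> bool" where
  refl: "pop_reach P P"
| step: "pop_reach P Q \<Longrightarrow> pop_ok Q i \<Longrightarrow> pop_reach P (pop Q i)"

fun polypath :: "complex list \<Rightarrow> real \<Rightarrow> complex" where
  "polypath [] = linepath 0 0"
| "polypath [a] = linepath a a"
| "polypath [a, b] = linepath a b"
| "polypath (a # b # c # rest) = linepath a b +++ polypath (b # c # rest)"

definition closed_polypath :: "polygon \<Rightarrow> real \<Rightarrow> complex" where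
  "closed_polypath P = polypath (P @ [hd P])"

definition convex_polygon :: "polygon \<Rightarrow> bool" where
  "convex_polygon P \<longleftrightarrow> P \<noteq> [] \<and> simple_path (closed_polypath P) \<and>
     convex (inside (path_image (closed_polypath P)))"

text \<open>Alternating polygon A(x,y,sigma), 0-indexed: x 0..x (k-1), y 0..y (k-1), sigma 0..sigma (2k-1),
  where x i = x_(i+1), y i = y_(i+1), sigma j = sigma_(j+1).  List entry 2i is p_(2i+1) =
  (sigma_(2i+1) x_(i+1), 0); list entry 2i+1 is p_(2i+2) = (0, sigma_(2i+2) y_(i+1)).\<close>
definition alt_poly :: "nat \<Rightarrow> (nat \<Rightarrow> real) \<Rightarrow> (nat \<Rightarrow> real) \<Rightarrow> (nat \<Rightarrow> real) \<Rightarrow> polygon" where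
  "alt_poly k x y \<sigma> = map (\<lambda>j. if even j then Complex (\<sigma> j * x (j div 2)) 0
                                   else Complex 0 (\<sigma> j * y (j div 2))) [0..<2*k]"

definition alternating_family :: "nat \<Rightarrow> polygon set" where
  "alternating_family k = {alt_poly k x y \<sigma> | x y \<sigma>.
      (\<forall>i<k. x i > 0 \<and> y i > 0) \<and> inj_on x {..<k} \<and> inj_on y {..<k} \<and>
      (\<forall>j<2*k. \<sigma> j \<in> {-1, 1})}"

end

theory Submission imports Defs begin

text \<open>The neighbours of a vertex on one coordinate axis lie on the other axis, so a pop is a
  reflection in that other axis: it merely flips the sign of the popped vertex. Hence every polygon
  reachable by pops is again alternating, with the same x and y. Such a polygon is never convex:
  its k \<ge> 3 vertices on the real axis have distinct abscissae, so one of them, M, lies strictly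
  between two others A and B, and the edge from M to the next vertex Y (on the imaginary axis,
  off the origin) has its midpoint in the interior of the triangle ABY. In a convex polygon that
  interior lies inside the boundary curve, whereas the midpoint of an edge lies on it.\<close>

lemma reflect_line_real_axis:
  assumes "a \<in> \<real>" "b \<in> \<real>" "a \<noteq> b"
  shows "reflect_line a b z = cnj z"
proof -
  have "cnj a = a" "cnj b = b" using assms(1,2) by (simp_all add: Reals_cnj_iff)
  then show ?thesis using assms(3) by (simp add: reflect_line_def field_simps)
qed

lemma reflect_line_imag_axis:
  assumes "Re a = 0" "Re b = 0" "a \<noteq> b"
  shows "reflect_line a b z = - cnj z"
proof -
  have "cnj a = - a" "cnj b = - b" using assms(1,2) by (simp_all add: complex_eq_iff)
  moreover have "b - a \<noteq> 0" using assms(3) by simp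
  ultimately show ?thesis by (simp add: reflect_line_def field_simps)
qed

lemma even_prev_idx_iff:
  assumes "i < 2 * k"
  shows "even (prev_idx (2 * k) i) \<longleftrightarrow> odd i"
proof -
  have "even (prev_idx (2 * k) i) \<longleftrightarrow> even (i + 2 * k - 1)"
    unfolding prev_idx_def by (simp add: dvd_mod_iff)
  also have "\<dots> \<longleftrightarrow> odd i" using assms by (simp add: even_diff_nat)
  finally show ?thesis .
qed

lemma even_next_idx_iff: "even (next_idx (2 * k) i) \<longleftrightarrow> odd i"
  unfolding next_idx_def by (simp add: dvd_mod_iff)

lemma length_alt_poly [simp]: "length (alt_poly k x y \<sigma>) = 2 * k"
  by (simp add: alt_poly_def)

lemma nth_alt_poly:
  "j < 2 * k \<Longrightarrow> alt_poly k x y \<sigma> ! j =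
     (if even j then Complex (\<sigma> j * x (j div 2)) 0 else Complex 0 (\<sigma> j * y (j div 2)))"
  by (simp add: alt_poly_def)

lemma pop_alt_poly:
  assumes "pop_ok (alt_poly k x y \<sigma>) i"
  shows "pop (alt_poly k x y \<sigma>) i = alt_poly k x y (\<sigma>(i := - \<sigma> i))"
proof -
  let ?P = "alt_poly k x y \<sigma>"
  define p where "p = prev_idx (2 * k) i"
  define q where "q = next_idx (2 * k) i"
  have i: "i < 2 * k" and pq: "?P ! p \<noteq> ?P ! q"
    using assms by (simp_all add: pop_ok_def p_def q_def)
  have "p < 2 * k" "q < 2 * k" using i by (simp_all add: p_def q_def prev_idx_def next_idx_def)
  moreover have "even p \<longleftrightarrow> odd i" "even q \<longleftrightarrow> odd i"
    using i by (simp_all add: p_def q_def even_prev_idx_iff even_next_idx_iff)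
  ultimately have "reflect_line (?P ! p) (?P ! q) (?P ! i) = alt_poly k x y (\<sigma>(i := - \<sigma> i)) ! i"
    using i pq
    by (cases "even i") (simp_all add: nth_alt_poly reflect_line_real_axis reflect_line_imag_axis
        complex_is_Real_iff complex_eq_iff)
  then show ?thesis
    by (intro nth_equalityI) (auto simp: pop_def p_def q_def nth_alt_poly)
qed

lemma pop_reach_alt_poly:
  assumes "pop_reach P Q" "P = alt_poly k x y \<sigma>" "\<forall>j<2 * k. \<sigma> j \<in> {-1, 1}"
  shows "\<exists>\<tau>. Q = alt_poly k x y \<tau> \<and> (\<forall>j<2 * k. \<tau> j \<in> {-1, 1})"
  using assms
proof (induction rule: pop_reach.induct)
  case (refl P)
  then show ?case by blast
next
  case (step P Q i)
  then obtain \<tau> where "Q = alt_poly k x y \<tau>" "\<forall>j<2 * k. \<tau> j \<in> {-1, 1}" by blast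
  moreover from this step.hyps(2) have "pop Q i = alt_poly k x y (\<tau>(i := - \<tau> i))"
    by (simp add: pop_alt_poly)
  moreover have "\<forall>j<2 * k. (\<tau>(i := - \<tau> i)) j \<in> {-1, 1}"
    using \<open>\<forall>j<2 * k. \<tau> j \<in> {-1, 1}\<close> by auto
  ultimately show ?case by blast
qed

lemma pathstart_polypath: "L \<noteq> [] \<Longrightarrow> pathstart (polypath L) = hd L"
  by (induction L rule: polypath.induct) auto

lemma pathfinish_polypath: "L \<noteq> [] \<Longrightarrow> pathfinish (polypath L) = last L"
  by (induction L rule: polypath.induct) auto

lemma closed_segment_subset_path_image_polypath:
  "Suc j < length L \<Longrightarrow> closed_segment (L ! j) (L ! Suc j) \<subseteq> path_image (polypath L)"
proof (induction L arbitrary: j rule: polypath.induct)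
  case (4 a b c rest)
  have "path_image (polypath (a # b # c # rest)) =
        closed_segment a b \<union> path_image (polypath (b # c # rest))"
    by (simp add: path_image_join pathstart_polypath)
  with 4 show ?case by (cases j) auto
qed auto

lemma closed_segment_subset_path_image_closed_polypath:
  "Suc j < length P \<Longrightarrow> closed_segment (P ! j) (P ! Suc j) \<subseteq> path_image (closed_polypath P)"
  using closed_segment_subset_path_image_polypath[of j "P @ [hd P]"]
  by (simp add: closed_polypath_def nth_append)

lemma vertex_in_path_image_closed_polypath:
  assumes "v \<in> set P"
  shows "v \<in> path_image (closed_polypath P)"
proof -
  obtain j where "j < length P" "P ! j = v" using assms by (auto simp: in_set_conv_nth)
  then have "v \<in> closed_segment ((P @ [hd P]) ! j) ((P @ [hd P]) ! Suc j)"
    by (simp add: nth_append)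
  then show ?thesis
    using closed_segment_subset_path_image_polypath[of j "P @ [hd P]"] \<open>j < length P\<close>
    by (auto simp: closed_polypath_def)
qed

lemma interior_convex_hull_subset_inside:
  fixes g :: "real \<Rightarrow> complex"
  assumes "simple_path g" "pathfinish g = pathstart g" "convex (inside (path_image g))"
    and "T \<subseteq> path_image g"
  shows "interior (convex hull T) \<subseteq> inside (path_image g)"
proof -
  let ?K = "inside (path_image g)"
  have "open ?K" "frontier ?K = path_image g"
    using Jordan_inside_outside[OF assms(1,2)] by blast+
  then have "convex hull T \<subseteq> closure ?K"
    using assms(3,4) by (intro hull_minimal) (auto simp: frontier_def convex_closure)
  then have "interior (convex hull T) \<subseteq> interior (closure ?K)" by (rule interior_mono)
  also have "\<dots> = ?K"
    using convex_interior_closure[OF assms(3)] interior_open[OF \<open>open ?K\<close>] by simp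
  finally show ?thesis .
qed

lemma midpoint_in_interior_triangle:
  fixes A B M Y :: "'a::euclidean_space"
  assumes "DIM('a) = 2" "M \<in> open_segment A B" "\<not> collinear {A, B, Y}"
  shows "midpoint M Y \<in> interior (convex hull {A, B, Y})"
proof -
  obtain u where u: "0 < u" "u < 1" "M = (1 - u) *\<^sub>R A + u *\<^sub>R B"
    using assms(2) by (auto simp: in_segment)
  have "midpoint M Y = ((1 - u) / 2) *\<^sub>R A + (u / 2) *\<^sub>R B + (1 / 2) *\<^sub>R Y"
    by (simp add: u(3) midpoint_def scaleR_add_right)
  moreover have "0 < (1 - u) / 2" "0 < u / 2" "(1 - u) / 2 + u / 2 + 1 / 2 = (1::real)"
    using u(1,2) by (simp_all add: field_simps)
  ultimately show ?thesis
    unfolding interior_convex_hull_3_minimal[OF assms(3,1)]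
    by (intro CollectI) (metis half_gt_zero zero_less_one)
qed

lemma convex_polygon_collinear_next_vertex:
  assumes "convex_polygon P" "A \<in> set P" "B \<in> set P"
    and "Suc j < length P" "P ! j \<in> open_segment A B"
  shows "collinear {A, B, P ! Suc j}"
proof (rule ccontr)
  let ?Y = "P ! Suc j" and ?\<gamma> = "closed_polypath P"
  assume "\<not> collinear {A, B, ?Y}"
  then have "midpoint (P ! j) ?Y \<in> interior (convex hull {A, B, ?Y})"
    using assms(5) by (intro midpoint_in_interior_triangle) simp_all
  moreover have "pathfinish ?\<gamma> = pathstart ?\<gamma>"
    using assms(1) by (simp add: convex_polygon_def closed_polypath_def
        pathstart_polypath pathfinish_polypath)
  moreover have "{A, B, ?Y} \<subseteq> path_image ?\<gamma>"
    using assms(2-4) by (auto intro: vertex_in_path_image_closed_polypath)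
  ultimately have "midpoint (P ! j) ?Y \<in> inside (path_image ?\<gamma>)"
    using assms(1) interior_convex_hull_subset_inside[of ?\<gamma> "{A, B, ?Y}"]
    by (auto simp: convex_polygon_def)
  moreover have "midpoint (P ! j) ?Y \<in> path_image ?\<gamma>"
    using closed_segment_subset_path_image_closed_polypath[OF assms(4)]
      midpoint_in_closed_segment by blast
  ultimately show False using inside_no_overlap by blast
qed

lemma not_collinear_Reals_non_Real:
  fixes A B Y :: complex
  assumes "A \<in> \<real>" "B \<in> \<real>" "A \<noteq> B" "Y \<notin> \<real>"
  shows "\<not> collinear {A, B, Y}"
proof
  assume "collinear {A, B, Y}"
  then have "(Y - B) / (A - B) \<in> \<real>"
    by (simp add: collinear_3 collinear_iff_Reals)
  moreover have "A - B \<in> \<real>" "A - B \<noteq> 0" using assms(1-3) by auto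
  ultimately have "Y - B \<in> \<real>"
    by (metis Reals_mult nonzero_eq_divide_eq)
  then show False using assms(2,4) by (metis Reals_add diff_add_cancel)
qed

lemma exists_between_Min_Max:
  fixes S :: "'a::linorder set"
  assumes "finite S" "3 \<le> card S"
  shows "\<exists>m\<in>S. Min S < m \<and> m < Max S"
proof -
  have "\<not> S \<subseteq> {Min S, Max S}"
  proof
    assume "S \<subseteq> {Min S, Max S}"
    then have "card S \<le> card {Min S, Max S}" by (simp add: card_mono)
    also have "\<dots> \<le> 2" by (simp add: card_insert_if)
    finally show False using assms(2) by simp
  qed
  then obtain m where "m \<in> S" "m \<noteq> Min S" "m \<noteq> Max S" by blast
  then show ?thesis using assms(1) by (intro bexI[of _ m]) (auto simp: order_le_neq_trans)
qed

lemma alt_poly_not_convex: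
  assumes "k \<ge> 3" "\<forall>i<k. x i > 0 \<and> y i > 0" "inj_on x {..<k}" "\<forall>j<2 * k. \<sigma> j \<in> {-1, 1}"
  shows "\<not> convex_polygon (alt_poly k x y \<sigma>)"
proof
  let ?P = "alt_poly k x y \<sigma>"
  assume convex: "convex_polygon ?P"
  define r where "r j = \<sigma> (2 * j) * x j" for j
  have vertex: "?P ! (2 * j) = of_real (r j)" if "j < k" for j
    using that by (simp add: nth_alt_poly r_def complex_of_real_def)
  have "\<bar>r j\<bar> = x j" if "j < k" for j
  proof -
    have "\<sigma> (2 * j) \<in> {-1, 1}" using assms(4) that by simp
    then show ?thesis using assms(2) that by (auto simp: r_def abs_mult)
  qed
  then have "inj_on r {..<k}"
    using assms(3) by (metis inj_on_def lessThan_iff)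
  then have card: "card (r ` {..<k}) = k" by (simp add: card_image)
  then obtain i where i: "i < k" "Min (r ` {..<k}) < r i" "r i < Max (r ` {..<k})"
    using exists_between_Min_Max[of "r ` {..<k}"] assms(1) by auto
  obtain a b where ab: "a < k" "b < k"
    "Min (r ` {..<k}) = r a" "Max (r ` {..<k}) = r b"
    using Min_in[of "r ` {..<k}"] Max_in[of "r ` {..<k}"] card i(1) by fastforce
  have "?P ! (2 * a) \<in> set ?P" "?P ! (2 * b) \<in> set ?P" using ab by simp_all
  moreover have "?P ! (2 * i) \<in> open_segment (?P ! (2 * a)) (?P ! (2 * b))"
    using i ab by (simp add: vertex open_segment_eq_real_ivl)
  ultimately have "collinear {?P ! (2 * a), ?P ! (2 * b), ?P ! Suc (2 * i)}"
    using i(1) by (intro convex_polygon_collinear_next_vertex[OF convex]) simp_all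
  moreover have "?P ! Suc (2 * i) \<notin> \<real>"
  proof -
    have "\<sigma> (Suc (2 * i)) \<in> {-1, 1}" using assms(4) i(1) by simp
    then show ?thesis using assms(2) i(1) by (auto simp: nth_alt_poly complex_is_Real_iff)
  qed
  ultimately show False
    using ab i by (simp add: vertex not_collinear_Reals_non_Real)
qed

theorem theorem1:
  fixes k :: nat and P Q :: polygon
  assumes "k \<ge> 3"
    and "P \<in> alternating_family k"
    and "pop_reach P Q"
  shows "\<not> convex_polygon Q"
proof -
  obtain x y \<sigma> where P: "P = alt_poly k x y \<sigma>" and xy: "\<forall>i<k. x i > 0 \<and> y i > 0"
    and x: "inj_on x {..<k}" and \<sigma>: "\<forall>j<2 * k. \<sigma> j \<in> {-1, 1}"
    using assms(2) unfolding alternating_family_def by blast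
  obtain \<tau> where "Q = alt_poly k x y \<tau>" "\<forall>j<2 * k. \<tau> j \<in> {-1, 1}"
    using pop_reach_alt_poly[OF assms(3) P \<sigma>] by blast
  then show ?thesis using alt_poly_not_convex[OF assms(1) xy x] by simp
qed

end
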